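(* Let $s,t$ be processes, $\mathcal{Z}_s\in\mathrm{res}(s)$ with initial state $z_s$ and $\mathcal{Z}_t\in\mathrm{res}(t)$ with initial state $z_t$. Then $\Psi_{\mathcal{Z}_s}=\Psi_{\mathcal{Z}_t}$ if and only if $\Pr(\mathcal{C}(z_s,\alpha))=\Pr(\mathcal{C}(z_t,\alpha))$ for all $\alpha\in A^\star$.
   Context: PTS $(\mathcal{S},A,\to)$ with finitely supported distributions; processes image-finite and finite. Computations $c=s_0\xrightarrow{a_1}\cdots\xrightarrow{a_n}s_n$ via transitions $s_{i-1}\xrightarrow{a_i}\pi_i$, $s_i\in\mathrm{supp}(\pi_i)$; $\Pr(c)=\prod\pi_i(s_i)$ (empty computation: 1); $\mathrm{tr}(c)=a_1\cdots a_n$; $\mathcal{C}(z,\alpha)$ = computations from $z$ with trace $\alpha$; maximal = not a proper prefix of another computation from the same process; $\mathcal{C}_{\max}(z)$, $\mathcal{C}_{\max}(z,\alpha)$; $\Pr$ of a set is the sum. A resolution of $s$ is a PTS $\mathcal{Z}=(Z,A,\to_{\mathcal{Z}})$ with $\mathrm{corr}\colon Z\to\mathcal{S}$ and initial state $z_s$, $\mathrm{corr}(z_s)=s$, such that $z_s$ is in no target support, every other state is in the support of a target of a transition from a different state, every $z\xrightarrow{a}_{\mathcal{Z}}\pi$ is matched by $\mathrm{corr}(z)\xrightarrow{a}\pi'$ with $\pi(z')=\pi'(\mathrm{corr}(z'))$, and each state has at most one outgoing transition. Trace formulae $\Phi::=\top\mid\langle a\rangle\Phi$; tracing formula $\Phi_\varepsilon=\top$,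 $\Phi_{a\alpha}=\langle a\rangle\Phi_\alpha$. Trace distribution formulae $\bigoplus_{i\in I}r_i\Phi_i$ ($I$ finite nonempty, $\Phi_i$ pairwise distinct, $r_i\in(0,1]$, $\sum r_i=1$) are identified with probability distributions on trace formulae; equality means equality of these distributions. Mimicking formula of $\mathcal{Z}$ with initial state $z$: $\Psi_{\mathcal{Z}}=\bigoplus_{\alpha\in\mathrm{tr}(\mathcal{C}_{\max}(z))}\Pr(\mathcal{C}_{\max}(z,\alpha))\,\Phi_\alpha$. *)

theory Defs
  imports "HOL-Probability.Probability" "HOL-Library.Sublist"
begin

text \<open>A PTS over states 's and actions 'a is given by its transition relation
  T :: ('s * 'a * 's pmf) set ; (s,a,pi) in T means s --a--> pi.\<close>

type_synonym ('s,'a) pts = "('s \<times> 'a \<times> 's pmf) set"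

definition fin_supp_pts :: "('s,'a) pts \<Rightarrow> bool" where
  "fin_supp_pts T \<longleftrightarrow> (\<forall>(s,a,\<pi>)\<in>T. finite (set_pmf \<pi>))"

definition image_finite :: "('s,'a) pts \<Rightarrow> bool" where
  "image_finite T \<longleftrightarrow> (\<forall>s a. finite {\<pi>. (s,a,\<pi>) \<in> T})"

fun is_comp :: "('s,'a) pts \<Rightarrow> 's \<Rightarrow> ('a \<times> 's pmf \<times> 's) list \<Rightarrow> bool" where
  "is_comp T z [] = True"
| "is_comp T z ((a,\<pi>,z') # cs) = ((z,a,\<pi>) \<in> T \<and> z' \<in> set_pmf \<pi> \<and> is_comp T z' cs)"

definition comps :: "('s,'a) pts \<Rightarrow> 's \<Rightarrow> ('a \<times> 's pmf \<times> 's) list set" where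
  "comps T z = {c. is_comp T z c}"

definition comp_prob :: "('a \<times> 's pmf \<times> 's) list \<Rightarrow> real" where
  "comp_prob c = prod_list (map (\<lambda>(a,\<pi>,z'). pmf \<pi> z') c)"

definition comp_trace :: "('a \<times> 's pmf \<times> 's) list \<Rightarrow> 'a list" where
  "comp_trace c = map fst c"

definition Pr :: "('a \<times> 's pmf \<times> 's) list set \<Rightarrow> real" where
  "Pr C = (\<Sum>c\<in>C. comp_prob c)"

definition comps_tr :: "('s,'a) pts \<Rightarrow> 's \<Rightarrow> 'a list \<Rightarrow> ('a \<times> 's pmf \<times> 's) list set" where
  "comps_tr T z \<alpha> = {c \<in> comps T z. comp_trace c = \<alpha>}"

definition comps_max :: "('s,'a) pts \<Rightarrow> 's \<Rightarrow> ('a \<times> 's pmf \<times> 's) list set" where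
  "comps_max T z = {c \<in> comps T z. \<not> (\<exists>c'\<in>comps T z. strict_prefix c c')}"

definition comps_max_tr :: "('s,'a) pts \<Rightarrow> 's \<Rightarrow> 'a list \<Rightarrow> ('a \<times> 's pmf \<times> 's) list set" where
  "comps_max_tr T z \<alpha> = {c \<in> comps_max T z. comp_trace c = \<alpha>}"

definition finite_process :: "('s,'a) pts \<Rightarrow> 's \<Rightarrow> bool" where
  "finite_process T s \<longleftrightarrow> (\<exists>n. \<forall>c\<in>comps T s. length c \<le> n)"

definition is_resolution ::
  "('s,'a) pts \<Rightarrow> 's \<Rightarrow> 'z set \<Rightarrow> ('z,'a) pts \<Rightarrow> ('z \<Rightarrow> 's) \<Rightarrow> 'z \<Rightarrow> bool" where
  "is_resolution T s Z TZ corr z0 \<longleftrightarrow>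
     z0 \<in> Z \<and> corr z0 = s \<and>
     (\<forall>(z,a,\<pi>)\<in>TZ. z \<in> Z \<and> set_pmf \<pi> \<subseteq> Z) \<and>
     (\<forall>(z,a,\<pi>)\<in>TZ. z0 \<notin> set_pmf \<pi>) \<and>
     (\<forall>z\<in>Z. z \<noteq> z0 \<longrightarrow> (\<exists>(z',a,\<pi>)\<in>TZ. z' \<noteq> z \<and> z \<in> set_pmf \<pi>)) \<and>
     (\<forall>(z,a,\<pi>)\<in>TZ. \<exists>\<pi>'. (corr z, a, \<pi>') \<in> T \<and>
          (\<forall>z'\<in>set_pmf \<pi>. pmf \<pi> z' = pmf \<pi>' (corr z'))) \<and>
     (\<forall>z a \<pi> b \<rho>. (z,a,\<pi>) \<in> TZ \<and> (z,b,\<rho>) \<in> TZ \<longrightarrow> a = b \<and> \<pi> = \<rho>)"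

datatype 'a trace_formula = TTop | Diam 'a "'a trace_formula"

fun tracing :: "'a list \<Rightarrow> 'a trace_formula" where
  "tracing [] = TTop"
| "tracing (a # \<alpha>) = Diam a (tracing \<alpha>)"

text \<open>Trace distribution formulae are identified with (finitely supported) probability
  distributions on trace formulae, represented by their weight function.\<close>
definition mimicking :: "('z,'a) pts \<Rightarrow> 'z \<Rightarrow> 'a trace_formula \<Rightarrow> real" where
  "mimicking TZ z = (\<lambda>\<Phi>. \<Sum>\<alpha>\<in>comp_trace ` comps_max TZ z.
       if tracing \<alpha> = \<Phi> then Pr (comps_max_tr TZ z \<alpha>) else 0)"

end

theory Submission
  imports Defs
begin

text \<open>A resolution is deterministic, finitely branching and of bounded depth, so from every state
  its maximal computations carry total probability 1. Hence the probability of a computation equals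
  that of its maximal extensions, and \<open>Pr (C(z,\<alpha>))\<close> is the sum of \<open>Pr (C\<^sub>m\<^sub>a\<^sub>x(z,\<beta>))\<close>
  over the traces \<open>\<beta>\<close> extending \<open>\<alpha>\<close>. The mimicking formula records exactly the values
  \<open>Pr (C\<^sub>m\<^sub>a\<^sub>x(z,\<beta>))\<close>; only finitely many of them are nonzero, and by downward induction on the
  length of \<open>\<beta>\<close> they are determined by their sums over extensions.\<close>

definition deterministic :: "('s,'a) pts \<Rightarrow> bool" where
  "deterministic T \<longleftrightarrow> (\<forall>z a \<pi> b \<rho>. (z,a,\<pi>) \<in> T \<and> (z,b,\<rho>) \<in> T \<longrightarrow> a = b \<and> \<pi> = \<rho>)"

definition last_state :: "'s \<Rightarrow> ('a \<times> 's pmf \<times> 's) list \<Rightarrow> 's" where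
  "last_state z c = last (z # map (snd \<circ> snd) c)"

lemma deterministicD:
  "deterministic T \<Longrightarrow> (z,a,\<pi>) \<in> T \<Longrightarrow> (z,b,\<rho>) \<in> T \<Longrightarrow> b = a \<and> \<rho> = \<pi>"
  unfolding deterministic_def by blast

lemma Nil_in_comps [simp]: "[] \<in> comps T z"
  by (simp add: comps_def)

lemma Cons_in_comps [simp]:
  "(a,\<pi>,z') # c \<in> comps T z \<longleftrightarrow> (z,a,\<pi>) \<in> T \<and> z' \<in> set_pmf \<pi> \<and> c \<in> comps T z'"
  by (simp add: comps_def)

lemma comp_prob_Cons [simp]: "comp_prob ((a,\<pi>,z') # c) = pmf \<pi> z' * comp_prob c"
  by (simp add: comp_prob_def)

lemma comp_prob_append: "comp_prob (c @ d) = comp_prob c * comp_prob d"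
  by (simp add: comp_prob_def)

lemma append_in_comps:
  "c @ d \<in> comps T z \<longleftrightarrow> c \<in> comps T z \<and> d \<in> comps T (last_state z c)"
proof (induction c arbitrary: z)
  case (Cons x c)
  then show ?case by (cases x) (simp add: last_state_def)
qed (simp add: last_state_def)

lemma comps_no_transition:
  assumes "\<And>a \<pi>. (w,a,\<pi>) \<notin> T"
  shows "comps T w = {[]}"
proof -
  have "c = []" if "c \<in> comps T w" for c
    using that assms by (cases c) auto
  then show ?thesis by auto
qed

lemma comps_max_no_transition:
  assumes "\<And>a \<pi>. (w,a,\<pi>) \<notin> T"
  shows "comps_max T w = {[]}"
  using comps_no_transition[of w T] assms by (auto simp: comps_max_def)

lemma comps_transition:
  assumes "deterministic T" and "(w,a,\<pi>) \<in> T"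
  shows "comps T w = insert [] (\<Union>z'\<in>set_pmf \<pi>. Cons (a,\<pi>,z') ` comps T z')"
proof -
  have "c \<in> insert [] (\<Union>z'\<in>set_pmf \<pi>. Cons (a,\<pi>,z') ` comps T z')" if "c \<in> comps T w" for c
  proof (cases c)
    case (Cons x d)
    obtain b \<rho> z' where "x = (b,\<rho>,z')"
      by (cases x)
    with that Cons deterministicD[OF assms] show ?thesis
      by fastforce
  qed simp
  then show ?thesis using assms by auto
qed

lemma append_in_comps_max:
  assumes "c \<in> comps T z"
  shows "c @ e \<in> comps_max T z \<longleftrightarrow> e \<in> comps_max T (last_state z c)"
proof -
  have "(\<exists>c'\<in>comps T z. strict_prefix (c @ e) c') \<longleftrightarrow>
        (\<exists>e'\<in>comps T (last_state z c). strict_prefix e e')"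
  proof
    assume "\<exists>c'\<in>comps T z. strict_prefix (c @ e) c'"
    then obtain f where "c @ e @ f \<in> comps T z" "f \<noteq> []"
      by (auto simp: strict_prefix_def prefix_def)
    then show "\<exists>e'\<in>comps T (last_state z c). strict_prefix e e'"
      by (intro bexI[of _ "e @ f"]) (auto simp: append_in_comps strict_prefix_def)
  next
    assume "\<exists>e'\<in>comps T (last_state z c). strict_prefix e e'"
    then obtain e' where "e' \<in> comps T (last_state z c)" "strict_prefix e e'" ..
    with assms show "\<exists>c'\<in>comps T z. strict_prefix (c @ e) c'"
      by (intro bexI[of _ "c @ e'"]) (auto simp: append_in_comps strict_prefix_def)
  qed
  with assms show ?thesis
    by (auto simp: comps_max_def append_in_comps)
qed

lemma comps_max_transition:
  assumes "deterministic T" and "(w,a,\<pi>) \<in> T"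
  shows "comps_max T w = (\<Union>z'\<in>set_pmf \<pi>. Cons (a,\<pi>,z') ` comps_max T z')"
proof -
  have step: "(a,\<pi>,z') # e \<in> comps_max T w \<longleftrightarrow> e \<in> comps_max T z'" if "z' \<in> set_pmf \<pi>" for z' e
    using append_in_comps_max[of "[(a,\<pi>,z')]" T w e] that assms(2)
    by (simp add: last_state_def)
  obtain z' where "z' \<in> set_pmf \<pi>"
    using set_pmf_not_empty by fast
  with assms(2) have "[] \<notin> comps_max T w"
    by (auto simp: comps_max_def intro!: bexI[of _ "[(a,\<pi>,z')]"])
  moreover have "\<exists>z' e. c = (a,\<pi>,z') # e \<and> z' \<in> set_pmf \<pi>"
    if "c \<in> comps_max T w" "c \<noteq> []" for c
    using that assms unfolding comps_max_def
    by (cases c) (auto dest: deterministicD[OF assms])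
  ultimately show ?thesis
    using step by fastforce
qed

lemma finite_process_last_state:
  assumes "finite_process T z" and "c \<in> comps T z"
  shows "finite_process T (last_state z c)"
proof -
  obtain n where n: "\<forall>d\<in>comps T z. length d \<le> n"
    using assms(1) by (auto simp: finite_process_def)
  have "length e \<le> n" if "e \<in> comps T (last_state z c)" for e
  proof -
    from assms(2) that have "c @ e \<in> comps T z"
      by (simp add: append_in_comps)
    with n have "length (c @ e) \<le> n" ..
    then show ?thesis
      by simp
  qed
  then show ?thesis
    by (auto simp: finite_process_def)
qed

lemma finite_process_successor:
  assumes "finite_process T w" and "(w,a,\<pi>) \<in> T" and "z' \<in> set_pmf \<pi>"
  shows "finite_process T z'"
  using finite_process_last_state[OF assms(1), of "[(a,\<pi>,z')]"] assms(2,3)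
  by (simp add: last_state_def)

lemma comps_successor_length_less:
  assumes "\<forall>d\<in>comps T w. length d \<le> n" and "(w,a,\<pi>) \<in> T" and "z' \<in> set_pmf \<pi>"
    and "c \<in> comps T z'"
  shows "length c < n"
proof -
  from assms(2-4) have "(a,\<pi>,z') # c \<in> comps T w"
    by simp
  with assms(1) have "length ((a,\<pi>,z') # c) \<le> n" ..
  then show ?thesis
    by simp
qed

lemma finite_process_induct [consumes 1, case_names terminal transition]:
  assumes "finite_process T w"
    and terminal: "\<And>w. (\<And>a \<pi>. (w,a,\<pi>) \<notin> T) \<Longrightarrow> P w"
    and transition: "\<And>w a \<pi>. finite_process T w \<Longrightarrow> (w,a,\<pi>) \<in> T \<Longrightarrow>
                       (\<And>z'. z' \<in> set_pmf \<pi> \<Longrightarrow> P z') \<Longrightarrow> P w"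
  shows "P w"
proof -
  obtain n where "\<forall>c\<in>comps T w. length c \<le> n"
    using assms(1) by (auto simp: finite_process_def)
  then show ?thesis
  proof (induction n arbitrary: w)
    case 0
    have "(w,a,\<pi>) \<notin> T" for a \<pi>
    proof
      assume tr: "(w,a,\<pi>) \<in> T"
      obtain z' where "z' \<in> set_pmf \<pi>"
        using set_pmf_not_empty by fast
      from comps_successor_length_less[OF "0.prems" tr this Nil_in_comps] show False
        by simp
    qed
    then show ?case
      by (rule terminal)
  next
    case (Suc n)
    show ?case
    proof (cases "\<exists>a \<pi>. (w,a,\<pi>) \<in> T")
      case True
      then obtain a \<pi> where tr: "(w,a,\<pi>) \<in> T"
        by blast
      have "finite_process T w"
        unfolding finite_process_def using Suc.prems by blast
      moreover have "P z'" if "z' \<in> set_pmf \<pi>" for z'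
        using comps_successor_length_less[OF Suc.prems tr that] by (intro Suc.IH) (simp add: less_Suc_eq_le)
      ultimately show ?thesis
        using tr transition by blast
    next
      case False
      then show ?thesis
        by (intro terminal) blast
    qed
  qed
qed

lemma comps_max_prefix_trace_eq_UN:
  "{d \<in> comps_max T z. prefix \<alpha> (comp_trace d)} =
   (\<Union>c\<in>comps_tr T z \<alpha>. {d \<in> comps_max T z. prefix c d})"
proof (intro equalityI subsetI)
  fix d assume d: "d \<in> {d \<in> comps_max T z. prefix \<alpha> (comp_trace d)}"
  let ?c = "take (length \<alpha>) d"
  have "?c @ drop (length \<alpha>) d \<in> comps T z"
    using d by (simp add: comps_max_def)
  moreover have "comp_trace ?c = \<alpha>"
    using d by (auto simp: comp_trace_def prefix_def simp flip: take_map)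
  ultimately have "?c \<in> comps_tr T z \<alpha>"
    by (simp add: comps_tr_def append_in_comps del: append_take_drop_id)
  with d show "d \<in> (\<Union>c\<in>comps_tr T z \<alpha>. {d \<in> comps_max T z. prefix c d})"
    using take_is_prefix by blast
qed (auto simp: comps_tr_def comp_trace_def intro: map_mono_prefix)

context
  fixes T :: "('s,'a) pts"
  assumes det: "deterministic T" and fin_supp: "fin_supp_pts T"
begin

lemma finite_comps:
  assumes "finite_process T w"
  shows "finite (comps T w)"
  using assms
proof (induction rule: finite_process_induct)
  case (terminal w)
  then show ?case
    by (simp add: comps_no_transition)
next
  case (transition w a \<pi>)
  have "finite (set_pmf \<pi>)"
    using fin_supp transition.hyps(2) by (auto simp: fin_supp_pts_def)
  with transition show ?case
    by (simp add: comps_transition[OF det])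
qed

lemma finite_comps_max:
  assumes "finite_process T w"
  shows "finite (comps_max T w)"
  using finite_comps[OF assms] by (rule rev_finite_subset) (auto simp: comps_max_def)

lemma Pr_comps_max:
  assumes "finite_process T w"
  shows "Pr (comps_max T w) = 1"
  using assms
proof (induction rule: finite_process_induct)
  case (terminal w)
  then show ?case
    by (simp add: comps_max_no_transition Pr_def comp_prob_def)
next
  case (transition w a \<pi>)
  have fin_\<pi>: "finite (set_pmf \<pi>)"
    using fin_supp transition.hyps(2) by (auto simp: fin_supp_pts_def)
  have fin_max: "finite (comps_max T z')" if "z' \<in> set_pmf \<pi>" for z'
    using transition.hyps that by (blast intro: finite_comps_max finite_process_successor)
  have "Pr (comps_max T w) = (\<Sum>z'\<in>set_pmf \<pi>. Pr (Cons (a,\<pi>,z') ` comps_max T z'))"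
    unfolding comps_max_transition[OF det transition.hyps(2)] Pr_def
    by (rule sum.UNION_disjoint) (use fin_\<pi> fin_max in auto)
  also have "\<dots> = (\<Sum>z'\<in>set_pmf \<pi>. pmf \<pi> z' * Pr (comps_max T z'))"
    by (rule sum.cong) (simp_all add: Pr_def sum.reindex sum_distrib_left)
  also have "\<dots> = 1"
    using transition.IH fin_\<pi> by (simp add: sum_pmf_eq_1)
  finally show ?case .
qed

lemma Pr_comps_max_extending:
  assumes "finite_process T z" and "c \<in> comps T z"
  shows "Pr {d \<in> comps_max T z. prefix c d} = comp_prob c"
proof -
  have "{d \<in> comps_max T z. prefix c d} = (@) c ` comps_max T (last_state z c)"
    using append_in_comps_max[OF assms(2)] by (auto simp: prefix_def)
  then have "Pr {d \<in> comps_max T z. prefix c d} = comp_prob c * Pr (comps_max T (last_state z c))"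
    by (simp add: Pr_def sum.reindex inj_on_def comp_prob_append sum_distrib_left)
  also have "\<dots> = comp_prob c"
    using assms by (simp add: Pr_comps_max finite_process_last_state)
  finally show ?thesis .
qed

lemma Pr_comps_tr:
  assumes "finite_process T z"
  shows "Pr (comps_tr T z \<alpha>) = Pr {d \<in> comps_max T z. prefix \<alpha> (comp_trace d)}"
proof -
  have fin_tr: "finite (comps_tr T z \<alpha>)"
    using finite_comps[OF assms] by (rule rev_finite_subset) (auto simp: comps_tr_def)
  have fin_max: "finite (comps_max T z)"
    using assms by (rule finite_comps_max)
  have disjoint: "{d \<in> comps_max T z. prefix c d} \<inter> {d \<in> comps_max T z. prefix c' d} = {}"
    if "c \<in> comps_tr T z \<alpha>" "c' \<in> comps_tr T z \<alpha>" "c \<noteq> c'" for c c'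
  proof -
    have "length c = length c'"
      using that by (auto simp: comps_tr_def comp_trace_def dest: arg_cong[where f = length])
    then have "c = c'" if "prefix c d" "prefix c' d" for d
      using that prefix_length_prefix prefix_order.antisym by (metis order_refl)
    with that(3) show ?thesis
      by blast
  qed
  have "Pr {d \<in> comps_max T z. prefix \<alpha> (comp_trace d)} =
        Pr (\<Union>c\<in>comps_tr T z \<alpha>. {d \<in> comps_max T z. prefix c d})"
    by (simp only: comps_max_prefix_trace_eq_UN)
  also have "\<dots> = (\<Sum>c\<in>comps_tr T z \<alpha>. Pr {d \<in> comps_max T z. prefix c d})"
    unfolding Pr_def using fin_tr fin_max disjoint by (intro sum.UNION_disjoint) auto
  also have "\<dots> = Pr (comps_tr T z \<alpha>)"
    unfolding Pr_def[of "comps_tr T z \<alpha>"] using assms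
    by (intro sum.cong) (auto simp: Pr_comps_max_extending comps_tr_def)
  finally show ?thesis ..
qed

lemma Pr_comps_tr_sum_comps_max_tr:
  assumes "finite_process T z" and "finite S" and "comp_trace ` comps_max T z \<subseteq> S"
  shows "Pr (comps_tr T z \<alpha>) = (\<Sum>\<beta> | \<beta> \<in> S \<and> prefix \<alpha> \<beta>. Pr (comps_max_tr T z \<beta>))"
proof -
  have "Pr (comps_tr T z \<alpha>) = Pr {d \<in> comps_max T z. prefix \<alpha> (comp_trace d)}"
    using assms(1) by (rule Pr_comps_tr)
  also have "\<dots> = (\<Sum>\<beta> | \<beta> \<in> S \<and> prefix \<alpha> \<beta>.
                     Pr {d \<in> {d \<in> comps_max T z. prefix \<alpha> (comp_trace d)}. comp_trace d = \<beta>})"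
    unfolding Pr_def using assms finite_comps_max[OF assms(1)]
    by (intro sum.group[symmetric]) auto
  also have "\<dots> = (\<Sum>\<beta> | \<beta> \<in> S \<and> prefix \<alpha> \<beta>. Pr (comps_max_tr T z \<beta>))"
    by (intro sum.cong refl arg_cong[where f = Pr]) (auto simp: comps_max_tr_def)
  finally show ?thesis .
qed

end

lemma prefix_sums_eqD:
  fixes f g :: "'a list \<Rightarrow> 'b::cancel_comm_monoid_add"
  assumes "finite S" and outside: "\<And>\<beta>. \<beta> \<notin> S \<Longrightarrow> f \<beta> = g \<beta>"
    and sums: "\<And>\<alpha>. (\<Sum>\<beta> | \<beta> \<in> S \<and> prefix \<alpha> \<beta>. f \<beta>) = (\<Sum>\<beta> | \<beta> \<in> S \<and> prefix \<alpha> \<beta>. g \<beta>)"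
  shows "f \<alpha> = g \<alpha>"
proof -
  define M where "M = Suc (Max (length ` S))"
  have length_less_M: "length \<beta> < M" if "\<beta> \<in> S" for \<beta>
    using assms(1) that by (simp add: M_def le_imp_less_Suc)
  show ?thesis
  proof (induction \<alpha> rule: measure_induct_rule[where f = "\<lambda>\<alpha>. M - length \<alpha>"])
    case (less \<alpha>)
    show ?case
    proof (cases "\<alpha> \<in> S")
      case True
      let ?above = "{\<beta>. \<beta> \<in> S \<and> strict_prefix \<alpha> \<beta>}"
      have split: "{\<beta>. \<beta> \<in> S \<and> prefix \<alpha> \<beta>} = insert \<alpha> ?above" "\<alpha> \<notin> ?above"
        using True by auto
      have "f \<beta> = g \<beta>" if "\<beta> \<in> ?above" for \<beta>
        using that length_less_M prefix_length_less by (intro less.IH) fastforce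
      then have "sum f ?above = sum g ?above"
        by (rule sum.cong[OF refl])
      moreover have "f \<alpha> + sum f ?above = g \<alpha> + sum g ?above"
        using sums[of \<alpha>] assms(1) split by simp
      ultimately show ?thesis
        by simp
    qed (rule outside)
  qed
qed

lemma tracing_eq_iff [simp]: "tracing \<alpha> = tracing \<beta> \<longleftrightarrow> \<alpha> = \<beta>"
proof (induction \<alpha> arbitrary: \<beta>)
  case Nil
  then show ?case by (cases \<beta>) auto
next
  case (Cons a \<alpha>)
  then show ?case by (cases \<beta>) auto
qed

lemma surj_tracing: "surj tracing"
proof -
  have "\<Phi> \<in> range tracing" for \<Phi> :: "'a trace_formula"
  proof (induction \<Phi>)
    case TTop
    show ?case by (metis rangeI tracing.simps(1))
  next
    case (Diam a \<Phi>)
    then show ?case by (metis rangeE rangeI tracing.simps(2))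
  qed
  then show ?thesis by blast
qed

lemma comps_max_tr_eq_empty:
  "comps_max_tr T z \<alpha> = {} \<longleftrightarrow> \<alpha> \<notin> comp_trace ` comps_max T z"
  by (auto simp: comps_max_tr_def)

lemma mimicking_tracing:
  assumes "finite (comps_max T z)"
  shows "mimicking T z (tracing \<alpha>) = Pr (comps_max_tr T z \<alpha>)"
proof -
  have "mimicking T z (tracing \<alpha>) =
        (if \<alpha> \<in> comp_trace ` comps_max T z then Pr (comps_max_tr T z \<alpha>) else 0)"
    using assms by (simp add: mimicking_def sum.delta')
  also have "\<dots> = Pr (comps_max_tr T z \<alpha>)"
    using comps_max_tr_eq_empty[of T z \<alpha>] by (auto simp: Pr_def)
  finally show ?thesis .
qed

lemma mimicking_eq_iff:
  assumes "finite (comps_max T z)" and "finite (comps_max T' z')"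
  shows "mimicking T z = mimicking T' z' \<longleftrightarrow>
         (\<forall>\<alpha>. Pr (comps_max_tr T z \<alpha>) = Pr (comps_max_tr T' z' \<alpha>))"
proof -
  have "mimicking T z = mimicking T' z' \<longleftrightarrow>
        (\<forall>\<alpha>. mimicking T z (tracing \<alpha>) = mimicking T' z' (tracing \<alpha>))"
    using surj_tracing by (metis ext surjD)
  with assms show ?thesis
    by (simp add: mimicking_tracing)
qed

lemma finite_pmf_ge:
  assumes "\<epsilon> > 0"
  shows "finite {x. \<epsilon> \<le> pmf p x}"
proof (rule ccontr)
  assume "infinite {x. \<epsilon> \<le> pmf p x}"
  moreover obtain k :: nat where k: "1 / \<epsilon> < k"
    using reals_Archimedean2 by blast
  ultimately obtain B where B: "finite B" "card B = k" "B \<subseteq> {x. \<epsilon> \<le> pmf p x}"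
    using infinite_arbitrarily_large by blast
  then have "k * \<epsilon> \<le> (\<Sum>x\<in>B. pmf p x)"
    using sum_mono[of B "\<lambda>_. \<epsilon>" "pmf p"] by auto
  also have "\<dots> = measure_pmf.prob p B"
    using B(1) by (simp add: measure_measure_pmf_finite)
  also have "\<dots> \<le> 1"
    by simp
  finally show False
    using k assms by (simp add: field_simps)
qed

lemma deterministic_resolution:
  "is_resolution T s Z TZ corr z0 \<Longrightarrow> deterministic TZ"
  unfolding is_resolution_def deterministic_def by blast

lemma comps_resolution_length:
  assumes "is_resolution T s Z TZ corr z0" and "c \<in> comps TZ z"
  shows "\<exists>c'\<in>comps T (corr z). length c' = length c"
  using assms(2)
proof (induction c arbitrary: z)
  case (Cons x c)
  obtain a \<pi> z' where x: "x = (a,\<pi>,z')"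
    by (cases x)
  with Cons.prems have tr: "(z,a,\<pi>) \<in> TZ" and z': "z' \<in> set_pmf \<pi>" and c: "c \<in> comps TZ z'"
    by auto
  from assms(1) tr obtain \<pi>' where tr': "(corr z, a, \<pi>') \<in> T"
    and pmf_eq: "\<forall>y\<in>set_pmf \<pi>. pmf \<pi> y = pmf \<pi>' (corr y)"
    unfolding is_resolution_def by fast
  have "corr z' \<in> set_pmf \<pi>'"
    using z' pmf_eq by (metis pmf_positive set_pmf_iff less_irrefl)
  moreover obtain c' where "c' \<in> comps T (corr z')" "length c' = length c"
    using Cons.IH[OF c] by blast
  ultimately show ?case
    using tr' x by (intro bexI[of _ "(a,\<pi>',corr z') # c'"]) simp_all
qed simp

lemma finite_process_resolution:
  assumes "is_resolution T s Z TZ corr z0" and "finite_process T s"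
  shows "finite_process TZ z0"
proof -
  obtain n where n: "\<forall>c\<in>comps T s. length c \<le> n"
    using assms(2) by (auto simp: finite_process_def)
  have "corr z0 = s"
    using assms(1) by (simp add: is_resolution_def)
  then have "\<forall>c\<in>comps TZ z0. length c \<le> n"
    using n comps_resolution_length[OF assms(1)] by metis
  then show ?thesis
    by (auto simp: finite_process_def)
qed

text \<open>A resolution step carries the probabilities of a finitely supported step of the process,
  so all its masses are bounded below by the least positive one of that step.\<close>

lemma fin_supp_resolution:
  assumes res: "is_resolution T s Z TZ corr z0" and fin: "fin_supp_pts T"
  shows "fin_supp_pts TZ"
  unfolding fin_supp_pts_def
proof clarify
  fix z a \<pi> assume "(z,a,\<pi>) \<in> TZ"
  with res obtain \<pi>' where tr': "(corr z, a, \<pi>') \<in> T"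
    and pmf_eq: "\<forall>y\<in>set_pmf \<pi>. pmf \<pi> y = pmf \<pi>' (corr y)"
    unfolding is_resolution_def by fast
  define m where "m = Min (pmf \<pi>' ` set_pmf \<pi>')"
  have fin': "finite (set_pmf \<pi>')"
    using fin tr' by (auto simp: fin_supp_pts_def)
  then have "m > 0"
    by (simp add: m_def Min_gr_iff pmf_positive set_pmf_not_empty)
  moreover have "set_pmf \<pi> \<subseteq> {y. m \<le> pmf \<pi> y}"
  proof
    fix y assume y: "y \<in> set_pmf \<pi>"
    then have "corr y \<in> set_pmf \<pi>'"
      using pmf_eq by (metis pmf_positive set_pmf_iff less_irrefl)
    with fin' have "m \<le> pmf \<pi>' (corr y)"
      by (simp add: m_def)
    with y pmf_eq show "y \<in> {y. m \<le> pmf \<pi> y}"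
      by simp
  qed
  ultimately show "finite (set_pmf \<pi>)"
    using finite_pmf_ge finite_subset by blast
qed

theorem theorem9:
  fixes T :: "('s,'a) pts"
    and Zs :: "'z1 set" and TZs :: "('z1,'a) pts" and corrs :: "'z1 \<Rightarrow> 's" and zs :: 'z1
    and Zt :: "'z2 set" and TZt :: "('z2,'a) pts" and corrt :: "'z2 \<Rightarrow> 's" and zt :: 'z2
  assumes "fin_supp_pts T" and "image_finite T"
    and "finite_process T s" and "finite_process T t"
    and "is_resolution T s Zs TZs corrs zs"
    and "is_resolution T t Zt TZt corrt zt"
  shows "mimicking TZs zs = mimicking TZt zt \<longleftrightarrow>
         (\<forall>\<alpha>. Pr (comps_tr TZs zs \<alpha>) = Pr (comps_tr TZt zt \<alpha>))"
proof -
  have fp: "finite_process TZs zs" "finite_process TZt zt"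
    using assms(3-6) by (simp_all add: finite_process_resolution)
  have det: "deterministic TZs" "deterministic TZt"
    using assms(5,6) by (simp_all add: deterministic_resolution)
  have fs: "fin_supp_pts TZs" "fin_supp_pts TZt"
    using assms(1,5,6) by (simp_all add: fin_supp_resolution)
  note fin_max = finite_comps_max[OF det(1) fs(1) fp(1)] finite_comps_max[OF det(2) fs(2) fp(2)]
  define S where "S = comp_trace ` comps_max TZs zs \<union> comp_trace ` comps_max TZt zt"
  have "finite S"
    using fin_max by (simp add: S_def)
  have outside: "Pr (comps_max_tr TZs zs \<beta>) = Pr (comps_max_tr TZt zt \<beta>)" if "\<beta> \<notin> S" for \<beta>
  proof -
    have "comps_max_tr TZs zs \<beta> = {}" "comps_max_tr TZt zt \<beta> = {}"
      using that by (simp_all add: S_def comps_max_tr_eq_empty)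
    then show ?thesis
      by (simp add: Pr_def)
  qed
  have sum_s: "Pr (comps_tr TZs zs \<alpha>) = (\<Sum>\<beta> | \<beta> \<in> S \<and> prefix \<alpha> \<beta>. Pr (comps_max_tr TZs zs \<beta>))"
    for \<alpha> by (rule Pr_comps_tr_sum_comps_max_tr[OF det(1) fs(1) fp(1) \<open>finite S\<close>]) (auto simp: S_def)
  have sum_t: "Pr (comps_tr TZt zt \<alpha>) = (\<Sum>\<beta> | \<beta> \<in> S \<and> prefix \<alpha> \<beta>. Pr (comps_max_tr TZt zt \<beta>))"
    for \<alpha> by (rule Pr_comps_tr_sum_comps_max_tr[OF det(2) fs(2) fp(2) \<open>finite S\<close>]) (auto simp: S_def)
  show ?thesis
    unfolding mimicking_eq_iff[OF fin_max] sum_s sum_t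
    using prefix_sums_eqD[of S "\<lambda>\<beta>. Pr (comps_max_tr TZs zs \<beta>)" "\<lambda>\<beta>. Pr (comps_max_tr TZt zt \<beta>)"]
      \<open>finite S\<close> outside by auto
qed

end
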